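(* Let $Q$ be a real-valued $\Gamma$-periodic potential on a $\Gamma$-periodic graph $\mathcal G$. (i) If $\sigma(A(0)+Q)=\sigma(A(0))$ and the fundamental graph $\mathcal G_*$ has no loops, then $Q\equiv0$. (ii) If $\sigma(A(0)+Q)=\sigma(A(0)-\varkappa)$, where $\varkappa$ is the degree potential $\varkappa(v)=\varkappa_v$, then $Q\equiv-\varkappa$.
   Context: Let $\Gamma$ be a lattice of rank $d$ in $\mathbb R^d$ with basis $\mathfrak a_1,\dots,\mathfrak a_d$ and fundamental cell $\Omega=\{\sum_s x_s\mathfrak a_s: x_s\in[0,1)\}$. A $\Gamma$-periodic graph $\mathcal G=(\mathcal V,\mathcal E)$ is a connected, locally finite graph embedded in $\mathbb R^d$, invariant under translation by $\Gamma$, with finite quotient; $\mathcal G$ has no loops, multiple edges are allowed. Edges are counted with both orientations ($\mathcal A$ the oriented edges). The fundamental graph $\mathcal G_*=(\mathcal V_*,\mathcal A_* )=\mathcal G/\Gamma$ (may have loops, multiple edges); $\varkappa_v$ is the number of oriented edges starting at $v$. Every vertex is uniquely $v=v_0+[v]$ with $v_0\in\Omega$, $[v]\in\Gamma$; for $\mathbf e=(u,v)$, $\tau(\mathbf e)=[v]_{\mathbb A}-[u]_{\mathbb A}\in\mathbb Z^d$ (coordinates in the basis), well defined on $\mathcal A_*$. A potential is $Q:\mathcal V_*\to\mathbb R$. $A(0)$ is the operator on $\ell^2(\mathcal V_* )$ with $(A(0)f)(v)=\sum_{\mathbf e=(v,u)\in\mathcal A_*}f(u)$ (more generally $A(k)$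 with factors $e^{i\langle\tau(\mathbf e),k\rangle}$); $Q$, $\varkappa$ act by multiplication. $\sigma(\cdot)$ is the spectrum (eigenvalues with multiplicities). *)

theory Defs
  imports "HOL-Analysis.Analysis" "HOL-Computational_Algebra.Polynomial"
begin

text \<open>Combinatorial model of a Gamma-periodic graph via its fundamental graph.
  Vertices of the fundamental graph form the finite type 'v; oriented edges are the
  finite set E :: 'e set with source src, target tgt, orientation reversal rv, and
  index tau :: 'e => ('d => int), where 'd is a finite type of cardinality d
  (coordinates with respect to the lattice basis). The periodic graph itself has
  vertex set 'v x Z^d, and the oriented edge e at shift n goes from (src e, n)
  to (tgt e, \<lambda>i. n i + tau e i).\<close>

definition lift_adj ::
  "'e set \<Rightarrow> ('e \<Rightarrow> 'v) \<Rightarrow> ('e \<Rightarrow> 'v) \<Rightarrow> ('e \<Rightarrow> ('d \<Rightarrow> int))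
   \<Rightarrow> (('v \<times> ('d \<Rightarrow> int)) \<times> ('v \<times> ('d \<Rightarrow> int))) set" where
  "lift_adj E src tgt tau =
     {((src e, n), (tgt e, \<lambda>i. n i + tau e i)) | e n. e \<in> E}"

definition periodic_graph ::
  "'e set \<Rightarrow> ('e \<Rightarrow> 'v::finite) \<Rightarrow> ('e \<Rightarrow> 'v) \<Rightarrow> ('e \<Rightarrow> 'e)
   \<Rightarrow> ('e \<Rightarrow> ('d::finite \<Rightarrow> int)) \<Rightarrow> bool" where
  "periodic_graph E src tgt rv tau \<longleftrightarrow>
     finite E \<and>
     (\<forall>e\<in>E. rv e \<in> E \<and> rv (rv e) = e \<and> rv e \<noteq> e \<and>
              src (rv e) = tgt e \<and> tgt (rv e) = src e \<and> (\<forall>i. tau (rv e) i = - tau e i)) \<and>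
     \<comment> \<open>the periodic graph has no loops\<close>
     (\<forall>e\<in>E. src e = tgt e \<longrightarrow> (\<exists>i. tau e i \<noteq> 0)) \<and>
     \<comment> \<open>the periodic graph is connected\<close>
     (\<forall>x y. (x, y) \<in> (lift_adj E src tgt tau)\<^sup>*)"

definition has_loop :: "'e set \<Rightarrow> ('e \<Rightarrow> 'v) \<Rightarrow> ('e \<Rightarrow> 'v) \<Rightarrow> bool" where
  "has_loop E src tgt \<longleftrightarrow> (\<exists>e\<in>E. src e = tgt e)"

text \<open>Matrix of A(0): number of oriented edges of the fundamental graph from v to u.\<close>
definition adj0 :: "'e set \<Rightarrow> ('e \<Rightarrow> 'v::finite) \<Rightarrow> ('e \<Rightarrow> 'v) \<Rightarrow> real^'v^'v" where
  "adj0 E src tgt = (\<chi> v u. real (card {e\<in>E. src e = v \<and> tgt e = u}))"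

definition degree :: "'e set \<Rightarrow> ('e \<Rightarrow> 'v) \<Rightarrow> 'v \<Rightarrow> real" where
  "degree E src v = real (card {e\<in>E. src e = v})"

definition mult_op :: "('v::finite \<Rightarrow> real) \<Rightarrow> real^'v^'v" where
  "mult_op Q = (\<chi> v u. if v = u then Q v else 0)"

definition charpoly :: "real^'n^'n \<Rightarrow> real poly" where
  "charpoly M = det (\<chi> i j. (if i = j then [:0, 1:] else 0) - [:M $ i $ j:])"

definition spectrum_mset :: "real^'n^'n \<Rightarrow> real multiset" where
  "spectrum_mset M = proots (charpoly M)"

end

theory Submission
  imports Defs "HOL-Computational_Algebra.Fundamental_Theorem_Algebra"
begin

text \<open>Edge reversal makes the matrix \<open>A\<close> of \<open>A(0)\<close> symmetric, so all matrices involved are real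
  symmetric: their characteristic polynomials split over the reals and are therefore determined by
  the spectra.

  (i) If \<open>M = A + Q\<close> and \<open>A\<close> have the same characteristic polynomial, so do \<open>M\<^sup>2\<close> and \<open>A\<^sup>2\<close>,
  because \<open>det (t\<^sup>2 - M\<^sup>2) = \<plusminus>\<chi>\<^sub>M(t) \<chi>\<^sub>M(-t)\<close>; comparing the coefficients of degree \<open>n - 1\<close>
  gives \<open>tr M\<^sup>2 = tr A\<^sup>2\<close>. Without loops \<open>A\<close> has zero diagonal, so
  \<open>tr M\<^sup>2 = tr A\<^sup>2 + \<Sum>\<^sub>v Q\<^sub>v\<^sup>2\<close> and \<open>Q = 0\<close>.

  (ii) The quadratic form of \<open>A - \<kappa>\<close> is \<open>-\<onehalf> \<Sum>\<^sub>e (x(src e) - x(tgt e))\<^sup>2 \<le> 0\<close>, so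
  \<open>M = A + Q\<close>, having the same eigenvalues, is negative semidefinite. Equal traces give
  \<open>\<langle>1, M 1\<rangle> = \<Sum>\<^sub>v (\<kappa>\<^sub>v + Q\<^sub>v) = 0\<close>; thus \<open>1\<close> maximises the form of \<open>M\<close>, whence
  \<open>M 1 = 0\<close>, i.e. \<open>\<kappa> + Q = 0\<close>.\<close>

lemma transpose_add: "transpose (A + B) = transpose A + transpose (B::'a::semiring_1^'n^'m)"
  by (simp add: transpose_def vec_eq_iff)

lemma transpose_diff: "transpose (A - B) = transpose A - transpose (B::'a::ring_1^'n^'m)"
  by (simp add: transpose_def vec_eq_iff)

lemma symmetric_matrix_entry: "transpose M = M \<Longrightarrow> M$j$i = M$i$j"
  by (metis transpose_def vec_lambda_beta)

lemma matrix_add_rdistrib: "(A + B) ** C = A ** C + B ** C"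
  by (vector matrix_matrix_mult_def sum.distrib distrib_right)

lemma mat_diff_mult_mat_add: "(mat t - M) ** (mat t + M) = mat (t * t) - M ** (M::'a::comm_ring_1^'n^'n)"
proof -
  have "((mat t - M) ** (mat t + M))$i$j = (mat (t * t) - M ** M)$i$j" for i j
  proof -
    have "((mat t - M) ** (mat t + M))$i$j
        = (\<Sum>k\<in>UNIV. ((if i = k then t else 0) - M$i$k) * ((if k = j then t else 0) + M$k$j))"
      by (simp add: matrix_matrix_mult_def mat_def)
    also have "\<dots> = (\<Sum>k\<in>UNIV. (if i = k then t * (if k = j then t else 0) + t * M$k$j else 0)
        - (if k = j then M$i$k * t else 0) - M$i$k * M$k$j)"
      by (rule sum.cong) (auto simp: algebra_simps)
    also have "\<dots> = (mat (t * t) - M ** M)$i$j"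
      by (simp add: sum_subtractf matrix_matrix_mult_def mat_def)
    finally show ?thesis .
  qed
  then show ?thesis by (simp add: vec_eq_iff)
qed

lemma mat_mult_vec: "mat c *v x = c *s x"
  by (simp add: vec_eq_iff matrix_vector_mult_def mat_def if_distrib if_distribR cong: if_cong)

lemma det_uminus: "det (- A) = (-1) ^ CARD('n) * det (A::'a::comm_ring_1^'n^'n)"
proof -
  have "- A = (\<chi> i. (-1) *s A$i)" by (simp add: vec_eq_iff)
  then show ?thesis using det_rows_mul[of "\<lambda>_. -1" "\<lambda>i. A$i"] by simp
qed

lemma det_ring_hom:
  fixes f :: "'a::comm_ring_1 \<Rightarrow> 'b::comm_ring_1"
  assumes add: "\<And>x y. f (x + y) = f x + f y" and mult: "\<And>x y. f (x * y) = f x * f y"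
    and one: "f 1 = 1"
  shows "f (det (A::'a^'n^'n)) = det (\<chi> i j. f (A$i$j))"
proof -
  have zero: "f 0 = 0" using add[of 0 0] by simp
  have uminus: "f (- x) = - f x" for x by (metis add zero add.right_inverse minus_unique)
  have sign: "f (of_int (sign p)) = of_int (sign p)" for p :: "'n \<Rightarrow> 'n"
    by (cases p rule: sign_cases) (simp_all add: one uminus)
  have prod: "f (prod g S) = (\<Prod>x\<in>S. f (g x))" for g :: "'n \<Rightarrow> 'a" and S
    by (induction S rule: infinite_finite_induct) (simp_all add: mult one)
  show ?thesis
    unfolding det_def sum_comp_morphism[of f, OF zero add, symmetric]
    by (simp add: mult sign prod)
qed

lemma det_eq_0_iff_nontrivial_kernel:
  fixes A :: "'a::field^'n^'n"
  shows "det A = 0 \<longleftrightarrow> (\<exists>x. x \<noteq> 0 \<and> A *v x = 0)"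
  by (metis invertible_det_nz invertible_left_inverse matrix_left_invertible_ker)

lemma inner_matrix_vector_symmetric:
  fixes M :: "real^'n^'n"
  assumes "transpose M = M"
  shows "x \<bullet> (M *v y) = y \<bullet> (M *v x)"
proof -
  have "x \<bullet> (M *v y) = (transpose M *v x) \<bullet> y" by (simp add: dot_lmul_matrix)
  then show ?thesis by (simp add: assms inner_commute)
qed

section \<open>Characteristic polynomials\<close>

lemma map_poly_of_real_add: "map_poly of_real (p + q) = map_poly of_real p + map_poly of_real q"
  by (intro poly_eqI) (simp add: coeff_map_poly)

lemma map_poly_of_real_diff: "map_poly of_real (p - q) = map_poly of_real p - map_poly of_real q"
  by (intro poly_eqI) (simp add: coeff_map_poly)

lemma map_poly_of_real_mult: "map_poly of_real (p * q) = map_poly of_real p * map_poly of_real q"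
  by (intro poly_eqI) (simp add: coeff_map_poly coeff_mult)

lemma poly_map_poly_of_real_charpoly:
  "poly (map_poly of_real (charpoly M)) z = det (mat z - (\<chi> i j. of_real (M$i$j)))"
proof -
  let ?ev = "\<lambda>p. poly (map_poly of_real p) z"
  have "?ev (charpoly M) = det (\<chi> i j. ?ev ((if i = j then [:0, 1:] else 0) - [:M$i$j:]))"
    unfolding charpoly_def
    by (subst det_ring_hom[where f = ?ev]) (simp_all add: map_poly_of_real_add map_poly_of_real_mult)
  also have "\<dots> = det (mat z - (\<chi> i j. of_real (M$i$j)))"
    by (rule arg_cong[of _ _ det]) (simp add: vec_eq_iff mat_def map_poly_of_real_diff map_poly_pCons)
  finally show ?thesis .
qed

lemma poly_charpoly: "poly (charpoly M) t = det (mat t - M)"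
  using poly_map_poly_of_real_charpoly[of M t] by (simp add: map_poly_idI)

lemma charpoly_root_iff_eigenvalue:
  fixes M :: "real^'n^'n"
  shows "poly (charpoly M) \<mu> = 0 \<longleftrightarrow> (\<exists>x. x \<noteq> 0 \<and> M *v x = \<mu> *\<^sub>R x)"
  by (auto simp: poly_charpoly det_eq_0_iff_nontrivial_kernel matrix_vector_mult_diff_rdistrib
      mat_mult_vec scalar_mult_eq_scaleR)

lemma degree_prod_linear_factors:
  fixes a :: "'i \<Rightarrow> 'a::idom"
  assumes "finite S"
  shows "Polynomial.degree (\<Prod>i\<in>S. [:- a i, 1:]) = card S"
  using assms by (simp add: degree_prod_sum_eq)

lemma lead_coeff_prod_linear_factors: "lead_coeff (\<Prod>i\<in>S. [:- a i, 1:] :: 'a::idom poly) = 1"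
  by (simp add: lead_coeff_prod)

lemma coeff_prod_linear_factors_subleading:
  fixes a :: "'i \<Rightarrow> 'a::idom"
  assumes "finite S" "S \<noteq> {}"
  shows "coeff (\<Prod>i\<in>S. [:- a i, 1:]) (card S - 1) = - (\<Sum>i\<in>S. a i)"
  using assms
proof (induction S rule: finite_ne_induct)
  case (singleton x)
  then show ?case by simp
next
  case (insert x S)
  let ?P = "\<Prod>i\<in>S. [:- a i, 1:]"
  have card: "card S = Suc (card S - 1)" using insert.hyps by (simp add: card_gt_0_iff)
  have top: "coeff ?P (card S) = 1"
    using lead_coeff_prod_linear_factors[of a S] degree_prod_linear_factors[of S a] insert.hyps by simp
  have "coeff (\<Prod>i\<in>insert x S. [:- a i, 1:]) (card (insert x S) - 1)
      = coeff ([:- a x, 1:] * ?P) (Suc (card S - 1))"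
    using insert.hyps card by simp
  also have "\<dots> = - a x * coeff ?P (card S) + coeff ?P (card S - 1)"
    by (subst card) simp
  finally show ?case using top insert.IH insert.hyps by simp
qed

lemma card_fixpoints_le_if_permutes_non_id:
  fixes p :: "'n::finite \<Rightarrow> 'n"
  assumes "p permutes UNIV" "p \<noteq> id"
  shows "card {i. p i = i} + 2 \<le> CARD('n)"
proof -
  obtain i where moved: "p i \<noteq> i" using assms(2) by (auto simp: fun_eq_iff)
  then have "p (p i) \<noteq> p i" using permutes_inj[OF assms(1)] by (metis injD)
  with moved have "{i, p i} \<subseteq> UNIV - {i. p i = i}" by auto
  then have "card {i, p i} \<le> card (UNIV - {i. p i = i})" by (rule card_mono[rotated]) simp
  then have "2 \<le> CARD('n) - card {i. p i = i}" using moved by (simp add: card_Diff_subset)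
  then show ?thesis by linarith
qed

text \<open>Every permutation other than the identity fixes at most \<open>n - 2\<close> indices, so only the
  diagonal term of the Leibniz expansion contributes to the two leading coefficients.\<close>
lemma coeff_charpoly_eq_coeff_diagonal_prod:
  fixes M :: "real^'n^'n"
  assumes "CARD('n) \<le> Suc k"
  shows "coeff (charpoly M) k = coeff (\<Prod>i\<in>UNIV. [:- M$i$i, 1:]) k"
proof -
  define C where "C = (\<chi> i j. (if i = j then [:0, 1:] else 0) - [:M$i$j:] :: real poly^'n^'n)"
  define T where "T = (\<lambda>p. of_int (sign p) * (\<Prod>i\<in>UNIV. C$i$p i) :: real poly)"
  define P where "P = {p. p permutes (UNIV::'n set)}"
  have "charpoly M = T id + sum T (P - {id})"
    unfolding charpoly_def det_def C_def T_def P_def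
    by (subst sum.remove[of _ id]) (simp_all add: finite_permutations permutes_id)
  moreover have "T id = (\<Prod>i\<in>UNIV. [:- M$i$i, 1:])" by (simp add: T_def C_def)
  moreover have "coeff (T p) k = 0" if p: "p \<in> P - {id}" for p
  proof -
    have "Polynomial.degree (T p) \<le> Polynomial.degree (\<Prod>i\<in>UNIV. C$i$p i)"
      unfolding T_def using degree_mult_le[of "of_int (sign p)" "\<Prod>i\<in>UNIV. C$i$p i"] by simp
    also have "\<dots> \<le> (\<Sum>i\<in>UNIV. Polynomial.degree (C$i$p i))"
      using degree_prod_sum_le[of UNIV "\<lambda>i. C$i$p i"] by (simp add: o_def)
    also have "\<dots> \<le> (\<Sum>i\<in>UNIV. if p i = i then 1 else 0)"
      by (rule sum_mono) (auto simp: C_def)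
    also have "\<dots> = card {i. p i = i}" by (simp add: sum.If_cases)
    finally have "Polynomial.degree (T p) \<le> card {i. p i = i}" .
    moreover have "card {i. p i = i} + 2 \<le> CARD('n)"
      using p by (intro card_fixpoints_le_if_permutes_non_id) (auto simp: P_def)
    ultimately show ?thesis using assms by (simp add: coeff_eq_0)
  qed
  ultimately show ?thesis by (simp add: coeff_sum)
qed

lemma lead_coeff_charpoly: "lead_coeff (charpoly (M::real^'n^'n)) = 1"
proof -
  have top: "coeff (charpoly M) (CARD('n)) = 1"
    using coeff_charpoly_eq_coeff_diagonal_prod[of "CARD('n)" M]
      lead_coeff_prod_linear_factors[of "\<lambda>i. M$i$i" UNIV]
      degree_prod_linear_factors[of UNIV "\<lambda>i. M$i$i"] by simp
  have "Polynomial.degree (charpoly M) \<le> CARD('n)"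
    using coeff_charpoly_eq_coeff_diagonal_prod[of _ M] degree_prod_linear_factors[of UNIV "\<lambda>i. M$i$i"]
    by (intro degree_le) (simp add: coeff_eq_0)
  moreover have "CARD('n) \<le> Polynomial.degree (charpoly M)" using top by (intro le_degree) simp
  ultimately show ?thesis using top by simp
qed

lemma coeff_charpoly_trace: "coeff (charpoly (M::real^'n^'n)) (CARD('n) - 1) = - trace M"
  using coeff_charpoly_eq_coeff_diagonal_prod[of "CARD('n) - 1" M]
    coeff_prod_linear_factors_subleading[of UNIV "\<lambda>i. M$i$i"]
  by (simp add: trace_def)

lemma poly_charpoly_square:
  fixes M :: "real^'n^'n"
  shows "poly (charpoly (M ** M)) (t * t) = (-1) ^ CARD('n) * poly (charpoly M) t * poly (charpoly M) (- t)"
proof -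
  have "- (mat (- t) - M) = mat t + M" by (simp add: vec_eq_iff mat_def)
  then have "det (mat t + M) = (-1) ^ CARD('n) * det (mat (- t) - M)" by (metis det_uminus)
  moreover have "poly (charpoly (M ** M)) (t * t) = det (mat t - M) * det (mat t + M)"
    by (simp add: poly_charpoly det_mul flip: mat_diff_mult_mat_add)
  ultimately show ?thesis by (simp add: poly_charpoly)
qed

text \<open>The two characteristic polynomials of the squares agree at every \<open>t\<^sup>2\<close>, i.e. at
  infinitely many points.\<close>
lemma charpoly_square_eq:
  fixes M N :: "real^'n^'n"
  assumes "charpoly M = charpoly N"
  shows "charpoly (M ** M) = charpoly (N ** N)"
proof -
  define d where "d = charpoly (M ** M) - charpoly (N ** N)"
  have "poly d (t * t) = 0" for t
    using poly_charpoly_square[of M t] poly_charpoly_square[of N t] assms by (simp add: d_def)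
  then have "poly d s = 0" if "s \<ge> 0" for s
    using that by (metis real_sqrt_mult_self abs_of_nonneg)
  then have "{0..} \<subseteq> {s. poly d s = 0}" by auto
  then have "infinite {s. poly d s = 0}"
    using infinite_Ici infinite_super by blast
  then have "d = 0" using poly_roots_finite by blast
  then show ?thesis by (simp add: d_def)
qed

section \<open>Real symmetric matrices\<close>

lemma poly_map_poly_of_real: "poly (map_poly of_real p) (of_real x) = of_real (poly p x)"
  by (induction p) (simp_all add: map_poly_pCons)

lemma real_poly_eq_prod_proots:
  fixes p :: "real poly"
  assumes "\<And>z::complex. poly (map_poly of_real p) z = 0 \<Longrightarrow> Im z = 0"
  shows "p = smult (lead_coeff p) (\<Prod>r\<in>#proots p. [:- r, 1:])"
  using assms
proof (induction p rule: poly_root_order_induct)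
  case 0
  then show ?case by simp
next
  case (no_roots p)
  have "poly (map_poly of_real p) z \<noteq> 0" for z :: complex
  proof
    assume root: "poly (map_poly of_real p) z = 0"
    then have "z = of_real (Re z)" using no_roots.prems by (simp add: complex_eq_iff)
    then show False using root no_roots.hyps[of "Re z"] by (metis of_real_eq_0_iff poly_map_poly_of_real)
  qed
  then have "constant (poly (map_poly (of_real :: real \<Rightarrow> complex) p))"
    using fundamental_theorem_of_algebra by blast
  then have "Polynomial.degree p = 0" by (simp add: constant_degree degree_map_poly)
  then show ?case by (auto elim: degree_eq_zeroE)
next
  case (root p x n)
  have "p \<noteq> 0" using root.hyps(2) by auto
  have "Im z = 0" if "poly (map_poly of_real p) z = 0" for z :: complex
    using root.prems[of z] that by (simp add: map_poly_of_real_mult)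
  then have "p = smult (lead_coeff p) (\<Prod>r\<in>#proots p. [:- r, 1:])" by (rule root.IH)
  then have "[:- x, 1:] ^ n * p = smult (lead_coeff p) ([:- x, 1:] ^ n * (\<Prod>r\<in>#proots p. [:- r, 1:]))"
    by (metis mult_smult_right)
  moreover have "proots ([:- x, 1:] ^ n * p) = replicate_mset n x + proots p"
    using \<open>p \<noteq> 0\<close> by (simp add: proots_mult proots_power)
  moreover have "lead_coeff ([:- x, 1:] ^ n * p) = lead_coeff p"
    by (simp add: lead_coeff_mult lead_coeff_power)
  ultimately show ?case by (simp only:) simp
qed

lemma charpoly_roots_real_if_symmetric:
  fixes M :: "real^'n^'n"
  assumes sym: "transpose M = M" and root: "poly (map_poly of_real (charpoly M)) z = 0"
  shows "Im z = 0"
proof -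
  let ?MC = "\<chi> i j. complex_of_real (M$i$j)"
  obtain x where "x \<noteq> 0" and "(mat z - ?MC) *v x = 0"
    using root det_eq_0_iff_nontrivial_kernel by (auto simp: poly_map_poly_of_real_charpoly)
  then have "?MC *v x = z *s x" by (simp add: matrix_vector_mult_diff_rdistrib mat_mult_vec)
  then have eigen: "(\<Sum>j\<in>UNIV. of_real (M$i$j) * x$j) = z * x$i" for i
    by (simp add: vec_eq_iff matrix_vector_mult_def)
  define s where "s = (\<Sum>i\<in>UNIV. \<Sum>j\<in>UNIV. cnj (x$i) * of_real (M$i$j) * x$j)"
  define n where "n = (\<Sum>i\<in>UNIV. (cmod (x$i))\<^sup>2)"
  have "s = (\<Sum>i\<in>UNIV. cnj (x$i) * (z * x$i))"
    unfolding s_def eigen[symmetric] by (simp add: sum_distrib_left mult.assoc)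
  also have "\<dots> = z * of_real n"
    unfolding n_def of_real_sum by (simp add: sum_distrib_left complex_norm_square mult_ac del: of_real_power)
  finally have s: "s = z * of_real n" .
  have "cnj s = (\<Sum>i\<in>UNIV. \<Sum>j\<in>UNIV. cnj (x$j) * of_real (M$j$i) * x$i)"
    unfolding s_def by (simp add: symmetric_matrix_entry[OF sym] mult_ac)
  also have "\<dots> = s" unfolding s_def by (rule sum.swap)
  finally have "Im s = 0" by (metis Reals_cnj_iff complex_is_Real_iff)
  moreover have "n > 0"
  proof -
    obtain k where "x$k \<noteq> 0" using \<open>x \<noteq> 0\<close> by (metis vec_eq_iff zero_index)
    then have "0 < (cmod (x$k))\<^sup>2" by simp
    also have "\<dots> \<le> n" unfolding n_def by (rule member_le_sum) auto
    finally show ?thesis .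
  qed
  ultimately show ?thesis using s by simp
qed

lemma charpoly_eq_if_spectrum_eq:
  fixes M N :: "real^'n^'n"
  assumes "transpose M = M" "transpose N = N" and "spectrum_mset M = spectrum_mset N"
  shows "charpoly M = charpoly N"
  using real_poly_eq_prod_proots[of "charpoly M"] real_poly_eq_prod_proots[of "charpoly N"]
    charpoly_roots_real_if_symmetric assms
  by (metis lead_coeff_charpoly spectrum_mset_def)

lemma linear_coeff_zero_if_quadratic_nonpos:
  fixes a b :: real
  assumes "\<And>t. 2 * t * b + t\<^sup>2 * a \<le> 0"
  shows "b = 0"
proof (rule ccontr)
  assume "b \<noteq> 0"
  define c where "c = 1 / (\<bar>a\<bar> + 1)"
  have "0 < c" "c * \<bar>a\<bar> < 1" by (simp_all add: c_def field_simps)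
  moreover have "c * (- \<bar>a\<bar>) \<le> c * a" using \<open>0 < c\<close> by (intro mult_left_mono) auto
  ultimately have "0 < 2 + c * a" by simp
  with \<open>0 < c\<close> \<open>b \<noteq> 0\<close> have "0 < c * b\<^sup>2 * (2 + c * a)" by simp
  also have "\<dots> = 2 * (c * b) * b + (c * b)\<^sup>2 * a" by (simp add: power2_eq_square algebra_simps)
  also have "\<dots> \<le> 0" by (rule assms)
  finally show False by simp
qed

lemma matrix_vector_eq_0_if_nonpos_form_vanishes:
  fixes M :: "real^'n^'n"
  assumes sym: "transpose M = M" and nonpos: "\<And>x. x \<bullet> (M *v x) \<le> 0" and "y \<bullet> (M *v y) = 0"
  shows "M *v y = 0"
proof -
  let ?h = "M *v y"
  have "2 * t * (?h \<bullet> ?h) + t\<^sup>2 * (?h \<bullet> (M *v ?h)) \<le> 0" for t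
  proof -
    have "(y + t *\<^sub>R ?h) \<bullet> (M *v (y + t *\<^sub>R ?h))
        = y \<bullet> (M *v y) + 2 * t * (?h \<bullet> ?h) + t\<^sup>2 * (?h \<bullet> (M *v ?h))"
      using inner_matrix_vector_symmetric[OF sym, of y ?h]
      by (simp add: matrix_vector_right_distrib matrix_vector_mult_scaleR inner_add_left
          inner_add_right power2_eq_square algebra_simps)
    then show ?thesis using nonpos[of "y + t *\<^sub>R ?h"] \<open>y \<bullet> (M *v y) = 0\<close> by simp
  qed
  then have "?h \<bullet> ?h = 0" by (rule linear_coeff_zero_if_quadratic_nonpos)
  then show ?thesis by simp
qed

text \<open>The maximum \<open>\<mu>\<close> of the quadratic form on the unit sphere is an eigenvalue: at a
  maximiser the form of \<open>M - \<mu> I\<close> attains its maximum \<open>0\<close>.\<close>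
lemma quadratic_form_nonpos_if_charpoly_roots_nonpos:
  fixes M :: "real^'n^'n"
  assumes sym: "transpose M = M" and roots: "\<And>\<mu>. poly (charpoly M) \<mu> = 0 \<Longrightarrow> \<mu> \<le> 0"
  shows "x \<bullet> (M *v x) \<le> 0"
proof -
  let ?f = "\<lambda>y. y \<bullet> (M *v y)"
  have "continuous_on (sphere 0 1) ?f"
    by (intro continuous_intros linear_continuous_on matrix_vector_mul_bounded_linear)
  moreover have "sphere (0::real^'n) 1 \<noteq> {}" by simp
  ultimately obtain y where y: "y \<in> sphere 0 1" and max: "\<And>u. u \<in> sphere 0 1 \<Longrightarrow> ?f u \<le> ?f y"
    using continuous_attains_sup[OF compact_sphere] by blast
  define \<mu> where "\<mu> = ?f y"
  have bound: "?f z \<le> \<mu> * (z \<bullet> z)" for z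
  proof (cases "z = 0")
    case False
    have "?f z = (norm z)\<^sup>2 * ?f (z /\<^sub>R norm z)"
      using False by (simp add: matrix_vector_mult_scaleR power2_eq_square field_simps)
    also have "\<dots> \<le> (norm z)\<^sup>2 * \<mu>"
      using False max[of "z /\<^sub>R norm z"] by (simp add: \<mu>_def mult_left_mono)
    finally show ?thesis by (simp add: dot_square_norm mult.commute)
  qed simp
  let ?M' = "M - mat \<mu>"
  have "transpose ?M' = ?M'" using sym by (simp add: transpose_diff)
  moreover have "z \<bullet> (?M' *v z) \<le> 0" for z
    using bound[of z] by (simp add: matrix_vector_mult_diff_rdistrib mat_mult_vec scalar_mult_eq_scaleR inner_diff_right)
  moreover have "y \<bullet> (?M' *v y) = 0"
    using y by (simp add: \<mu>_def matrix_vector_mult_diff_rdistrib mat_mult_vec scalar_mult_eq_scaleR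
        inner_diff_right dot_square_norm)
  ultimately have "?M' *v y = 0" by (rule matrix_vector_eq_0_if_nonpos_form_vanishes)
  then have "M *v y = \<mu> *\<^sub>R y"
    by (simp add: matrix_vector_mult_diff_rdistrib mat_mult_vec scalar_mult_eq_scaleR)
  moreover have "y \<noteq> 0" using y by auto
  ultimately have "\<mu> \<le> 0" using roots charpoly_root_iff_eigenvalue by blast
  then have "\<mu> * (x \<bullet> x) \<le> 0" by (simp add: mult_nonpos_nonneg)
  then show ?thesis using bound[of x] by linarith
qed

lemma charpoly_root_nonpos_if_form_nonpos:
  fixes M :: "real^'n^'n"
  assumes "\<And>x. x \<bullet> (M *v x) \<le> 0" and "poly (charpoly M) \<mu> = 0"
  shows "\<mu> \<le> 0"
proof -
  obtain x where "x \<noteq> 0" and "M *v x = \<mu> *\<^sub>R x"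
    using assms(2) by (auto simp: charpoly_root_iff_eigenvalue)
  then have "\<mu> * (x \<bullet> x) = x \<bullet> (M *v x)" by simp
  then have "\<mu> * (x \<bullet> x) \<le> 0" using assms(1)[of x] by simp
  moreover have "0 < x \<bullet> x" using \<open>x \<noteq> 0\<close> by simp
  ultimately show ?thesis by (meson mult_le_0_iff not_le)
qed

section \<open>Operators on the fundamental graph\<close>

lemma adj0_entry: "adj0 E src tgt $ i $ j = real (card {e\<in>E. src e = i \<and> tgt e = j})"
  by (simp add: adj0_def)

lemma mult_op_entry [simp]: "mult_op Q $ i $ j = (if i = j then Q i else 0)"
  by (simp add: mult_op_def)

lemma mult_op_mult_vec: "mult_op Q *v x = (\<chi> v. Q v * x$v)"
  by (simp add: vec_eq_iff matrix_vector_mult_def if_distrib if_distribR cong: if_cong)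

lemma transpose_mult_op: "transpose (mult_op Q) = mult_op Q"
  by (simp add: transpose_def vec_eq_iff)

lemma trace_mult_op: "trace (mult_op Q) = (\<Sum>v\<in>UNIV. Q v)"
  by (simp add: trace_def)

lemma trace_mult_op_right: "trace (A ** mult_op Q) = (\<Sum>v\<in>UNIV. A$v$v * Q v)"
  by (simp add: trace_def matrix_matrix_mult_def if_distrib if_distribR cong: if_cong)

lemma real_card_filter_eq_sum:
  "finite E \<Longrightarrow> real (card {e\<in>E. P e}) = (\<Sum>e\<in>E. if P e then 1 else 0)"
  by (simp add: sum.If_cases Int_def)

lemma sum_weighted_adj0:
  assumes "finite E"
  shows "(\<Sum>i\<in>UNIV. \<Sum>j\<in>UNIV. f i j * adj0 E src tgt $ i $ j) = (\<Sum>e\<in>E. f (src e) (tgt e))"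
proof -
  have "(\<Sum>i\<in>UNIV. \<Sum>j\<in>UNIV. f i j * adj0 E src tgt $ i $ j)
      = (\<Sum>i\<in>UNIV. \<Sum>j\<in>UNIV. \<Sum>e\<in>E. if src e = i \<and> tgt e = j then f i j else 0)"
    using assms by (simp add: adj0_entry real_card_filter_eq_sum sum_distrib_left if_distrib cong: if_cong)
  also have "\<dots> = (\<Sum>e\<in>E. \<Sum>i\<in>UNIV. \<Sum>j\<in>UNIV. if src e = i \<and> tgt e = j then f i j else 0)"
    by (subst sum.swap) (simp add: sum.swap[of _ UNIV E])
  also have "\<dots> = (\<Sum>e\<in>E. f (src e) (tgt e))"
  proof (rule sum.cong[OF refl])
    fix e
    have "(\<Sum>j\<in>UNIV. if src e = i \<and> tgt e = j then f i j else 0) = (if src e = i then f i (tgt e) else 0)"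
      for i by (cases "src e = i") simp_all
    then show "(\<Sum>i\<in>UNIV. \<Sum>j\<in>UNIV. if src e = i \<and> tgt e = j then f i j else 0) = f (src e) (tgt e)"
      by simp
  qed
  finally show ?thesis .
qed

lemma sum_degree_weighted:
  fixes g :: "'v::finite \<Rightarrow> real"
  assumes "finite E"
  shows "(\<Sum>v\<in>UNIV. degree E src v * g v) = (\<Sum>e\<in>E. g (src e))"
proof -
  have "(\<Sum>v\<in>UNIV. degree E src v * g v) = (\<Sum>v\<in>UNIV. \<Sum>e\<in>E. if src e = v then g v else 0)"
    using assms by (auto simp: degree_def real_card_filter_eq_sum sum_distrib_right intro!: sum.cong)
  also have "\<dots> = (\<Sum>e\<in>E. g (src e))" by (subst sum.swap) simp
  finally show ?thesis .
qed

lemma inner_adj0_mult_vec: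
  assumes "finite E"
  shows "x \<bullet> (adj0 E src tgt *v x) = (\<Sum>e\<in>E. x$src e * x$tgt e)"
proof -
  have "x \<bullet> (adj0 E src tgt *v x) = (\<Sum>i\<in>UNIV. \<Sum>j\<in>UNIV. (x$i * x$j) * adj0 E src tgt $ i $ j)"
    by (simp add: inner_vec_def matrix_vector_mult_def sum_distrib_left mult_ac)
  then show ?thesis using sum_weighted_adj0[OF assms] by simp
qed

lemma adj0_mult_vec_one:
  assumes "finite E"
  shows "adj0 E src tgt *v (\<chi> v. 1) = (\<chi> v. degree E src v)"
proof -
  have "(\<Sum>j\<in>UNIV. adj0 E src tgt $ i $ j) = degree E src i" for i
  proof -
    have "(\<Sum>j\<in>UNIV. adj0 E src tgt $ i $ j)
        = (\<Sum>i'\<in>UNIV. \<Sum>j\<in>UNIV. (if i' = i then 1 else 0) * adj0 E src tgt $ i' $ j)"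
      by (subst sum.swap) (simp add: mult_if_delta)
    also have "\<dots> = degree E src i"
      using sum_weighted_adj0[OF assms, of "\<lambda>i' j. if i' = i then 1 else 0"]
      by (simp add: degree_def real_card_filter_eq_sum[OF assms])
    finally show ?thesis .
  qed
  then show ?thesis by (simp add: vec_eq_iff matrix_vector_mult_def)
qed

lemma periodic_graph_finite: "periodic_graph E src tgt rv tau \<Longrightarrow> finite E"
  by (simp add: periodic_graph_def)

lemma periodic_graph_reversal:
  assumes "periodic_graph E src tgt rv tau" "e \<in> E"
  shows "rv e \<in> E" "src (rv e) = tgt e" "tgt (rv e) = src e" "rv (rv e) = e"
  using assms by (simp_all add: periodic_graph_def)

lemma transpose_adj0:
  assumes "periodic_graph E src tgt rv tau"
  shows "transpose (adj0 E src tgt) = adj0 E src tgt"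
proof -
  have "bij_betw rv {e\<in>E. src e = j \<and> tgt e = i} {e\<in>E. src e = i \<and> tgt e = j}" for i j
    using periodic_graph_reversal[OF assms] by (intro bij_betwI[where g = rv]) auto
  then have "card {e\<in>E. src e = j \<and> tgt e = i} = card {e\<in>E. src e = i \<and> tgt e = j}" for i j
    by (rule bij_betw_same_card)
  then show ?thesis by (simp add: transpose_def vec_eq_iff adj0_entry)
qed

lemma sum_tgt_eq_sum_src:
  assumes "periodic_graph E src tgt rv tau"
  shows "(\<Sum>e\<in>E. g (tgt e)) = (\<Sum>e\<in>E. g (src e))"
proof -
  have "bij_betw rv E E"
    using periodic_graph_reversal[OF assms] by (intro bij_betwI[where g = rv]) auto
  have "(\<Sum>e\<in>E. g (tgt e)) = (\<Sum>e\<in>E. g (src (rv e)))"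
    by (rule sum.cong) (simp_all add: periodic_graph_reversal[OF assms])
  also have "\<dots> = (\<Sum>e\<in>E. g (src e))"
    using sum.reindex_bij_betw[OF \<open>bij_betw rv E E\<close>, of "\<lambda>e. g (src e)"] by simp
  finally show ?thesis .
qed

lemma inner_adj0_minus_degree_mult_vec:
  assumes "periodic_graph E src tgt rv tau"
  shows "x \<bullet> ((adj0 E src tgt - mult_op (degree E src)) *v x) = - (\<Sum>e\<in>E. (x$src e - x$tgt e)\<^sup>2) / 2"
proof -
  have fin: "finite E" using assms by (rule periodic_graph_finite)
  have "x \<bullet> (mult_op (degree E src) *v x) = (\<Sum>e\<in>E. (x$src e)\<^sup>2)"
    using sum_degree_weighted[OF fin, where g = "\<lambda>v. (x$v)\<^sup>2"]
    by (simp add: mult_op_mult_vec inner_vec_def power2_eq_square mult_ac)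
  moreover have "(\<Sum>e\<in>E. (x$tgt e)\<^sup>2) = (\<Sum>e\<in>E. (x$src e)\<^sup>2)"
    by (rule sum_tgt_eq_sum_src[OF assms])
  ultimately show ?thesis
    using inner_adj0_mult_vec[OF fin, of x]
    by (simp add: matrix_vector_mult_diff_rdistrib inner_diff_right power2_diff sum.distrib
        sum_subtractf sum_distrib_left mult_ac)
qed

section \<open>Isospectral potentials\<close>

lemma potential_eq_0_if_isospectral_to_adj0:
  assumes "periodic_graph E src tgt rv tau" and "\<not> has_loop E src tgt"
    and "spectrum_mset (adj0 E src tgt + mult_op Q) = spectrum_mset (adj0 E src tgt)"
  shows "Q = (\<lambda>v. 0)"
proof -
  let ?A = "adj0 E src tgt" and ?D = "mult_op Q"
  have "transpose ?A = ?A" using assms(1) by (rule transpose_adj0)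
  then have "charpoly (?A + ?D) = charpoly ?A"
    using assms(3) by (intro charpoly_eq_if_spectrum_eq) (simp_all add: transpose_add transpose_mult_op)
  then have "charpoly ((?A + ?D) ** (?A + ?D)) = charpoly (?A ** ?A)" by (rule charpoly_square_eq)
  then have "trace ((?A + ?D) ** (?A + ?D)) = trace (?A ** ?A)"
    using coeff_charpoly_trace[of "(?A + ?D) ** (?A + ?D)"] coeff_charpoly_trace[of "?A ** ?A"] by simp
  moreover have "trace (?A ** ?D) = 0"
  proof -
    have "{e\<in>E. src e = v \<and> tgt e = v} = {}" for v using assms(2) by (auto simp: has_loop_def)
    then show ?thesis by (simp add: trace_mult_op_right adj0_entry del: Collect_empty_eq)
  qed
  moreover have "trace (?D ** ?D) = (\<Sum>v\<in>UNIV. (Q v)\<^sup>2)"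
    by (simp add: trace_mult_op_right power2_eq_square)
  ultimately have "(\<Sum>v\<in>UNIV. (Q v)\<^sup>2) = 0"
    by (simp add: matrix_add_ldistrib matrix_add_rdistrib trace_add trace_mul_sym[of ?D ?A])
  then show ?thesis by (simp add: fun_eq_iff sum_nonneg_eq_0_iff)
qed

lemma potential_eq_neg_degree_if_isospectral_to_adj0_minus_degree:
  assumes "periodic_graph E src tgt rv tau"
    and "spectrum_mset (adj0 E src tgt + mult_op Q)
       = spectrum_mset (adj0 E src tgt - mult_op (degree E src))"
  shows "Q = (\<lambda>v. - degree E src v)"
proof -
  let ?A = "adj0 E src tgt"
  let ?M = "?A + mult_op Q" and ?L = "?A - mult_op (degree E src)"
  have "transpose ?A = ?A" using assms(1) by (rule transpose_adj0)
  then have sym: "transpose ?M = ?M" "transpose ?L = ?L"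
    by (simp_all add: transpose_add transpose_diff transpose_mult_op)
  then have charpoly: "charpoly ?M = charpoly ?L" using assms(2) by (rule charpoly_eq_if_spectrum_eq)
  then have "trace ?M = trace ?L" using coeff_charpoly_trace[of ?M] coeff_charpoly_trace[of ?L] by simp
  then have trace: "(\<Sum>v\<in>UNIV. degree E src v + Q v) = 0"
    by (simp add: trace_add trace_sub trace_mult_op sum.distrib)
  have "\<mu> \<le> 0" if "poly (charpoly ?M) \<mu> = 0" for \<mu>
  proof (rule charpoly_root_nonpos_if_form_nonpos)
    show "x \<bullet> (?L *v x) \<le> 0" for x
      by (simp add: inner_adj0_minus_degree_mult_vec[OF assms(1)] sum_nonneg)
    show "poly (charpoly ?L) \<mu> = 0" using that charpoly by simp
  qed
  then have nonpos: "x \<bullet> (?M *v x) \<le> 0" for x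
    by (rule quadratic_form_nonpos_if_charpoly_roots_nonpos[OF sym(1)])
  have M_one: "?M *v (\<chi> v. 1) = (\<chi> v. degree E src v + Q v)"
    using periodic_graph_finite[OF assms(1)]
    by (simp add: matrix_vector_mult_add_rdistrib adj0_mult_vec_one mult_op_mult_vec vec_eq_iff)
  have "(\<chi> v. 1) \<bullet> (?M *v (\<chi> v. 1)) = 0"
    using trace by (simp add: M_one inner_vec_def)
  then have "?M *v (\<chi> v. 1) = 0" by (rule matrix_vector_eq_0_if_nonpos_form_vanishes[OF sym(1) nonpos])
  then show ?thesis by (simp add: M_one vec_eq_iff fun_eq_iff add_eq_0_iff)
qed

theorem proposition2p13:
  fixes E :: "'e set" and src tgt :: "'e \<Rightarrow> 'v::finite" and rv :: "'e \<Rightarrow> 'e"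
    and tau :: "'e \<Rightarrow> ('d::finite \<Rightarrow> int)" and Q :: "'v \<Rightarrow> real"
  assumes "periodic_graph E src tgt rv tau"
  shows "(spectrum_mset (adj0 E src tgt + mult_op Q) = spectrum_mset (adj0 E src tgt)
            \<and> \<not> has_loop E src tgt \<longrightarrow> Q = (\<lambda>v. 0))
       \<and> (spectrum_mset (adj0 E src tgt + mult_op Q)
            = spectrum_mset (adj0 E src tgt - mult_op (degree E src))
            \<longrightarrow> Q = (\<lambda>v. - degree E src v))"
  using potential_eq_0_if_isospectral_to_adj0[OF assms]
    potential_eq_neg_degree_if_isospectral_to_adj0_minus_degree[OF assms]
  by blast

end
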